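(* Let $(\mathcal A,\mathcal B)$ be a $(\theta,\theta)$ pair. The following are equivalent: (i) $(\mathcal A,\mathcal B)$ is nice; (ii) for every family $X$ of $\theta$ pairwise disjoint finite subsets of $\theta$ (indexed by $\theta$) and every $X$-sequence $S$, $\mathcal Q(X,S)$ has the $\kappa$-chain condition; (iii) every finite product of partial orders of the form $\mathcal Q(X,S)$ (with $X$ and $S$ as in (ii)) has the $\kappa$-chain condition.
   Context: Standing assumptions: $\theta$ is a singular cardinal of uncountable cofinality, $\kappa=\mathrm{cf}(\theta)$, and $\langle\theta_\alpha:\alpha<\kappa\rangle$ is a fixed increasing sequence of cardinals converging to $\theta$ with $\theta_0>\kappa$. A $(\theta,\theta)$ pair is $(\mathcal A,\mathcal B)$ with $\mathcal A=\{a_\xi:\xi<\theta\}$, $\mathcal B=\{b_\xi:\xi<\theta\}$ subsets of $\omega$ such that $a_\xi\cap b_\eta$ is finite for all $\xi,\eta<\theta$. For finite $x\subseteq\theta$, $a(x)=\bigcap_{\xi\in x}a_\xi$, $b(x)=\bigcap_{\xi\in x}b_\xi$, with $a(\emptyset)=b(\emptyset)=\omega$. The pair is nice if for every family $\{x_i:i<\theta\}$ of pairwise disjoint finite subsets of $\theta$ there are $i,j<\theta$ with $a(x_i)\cap b(x_j)\ne\emptyset$. Given a family $X=\{x_i:i<\theta\}$ of pairwise disjoint finite subsets of $\theta$, an $X$-sequence is $S=\{S_\alpha:\alpha<\kappa\}$ where the $S_\alpha$ are pairwise disjoint subsets of $\theta$, $|S_\alpha|>\theta_\alpha$, and $a(x_i)\cap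 b(x_j)=\emptyset$ for all $i,j\in S_\alpha$, for every $\alpha<\kappa$. $\mathcal Q(X,S)$ is the set of finite $F\subseteq\kappa$ such that for all distinct $\alpha,\beta\in F$ there exist $i\in S_\alpha$, $j\in S_\beta$ with $a(x_i)\cap b(x_j)\neq\emptyset$ or $b(x_i)\cap a(x_j)\ne\emptyset$; it is ordered by inclusion. Finite products carry the coordinatewise order. *)

theory Defs
  imports Main
begin

notation
  ordLeq3 (infix \<open>\<le>o\<close> 50) and
  ordLess2 (infix \<open><o\<close> 50) and
  ordIso2 (infix \<open>=o\<close> 50) and
  card_of (\<open>|_|\<close>)

text \<open>The cardinal theta is modelled as the cardinality of a set T; kappa as the
  cardinality of a set K, well-ordered by the initial (cardinal) well-order |K|,
  so that K with this order is the ordinal kappa.\<close>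

definition cofinal_in :: "'a rel \<Rightarrow> 'a set \<Rightarrow> bool" where
  "cofinal_in r A \<equiv> A \<subseteq> Field r \<and> (\<forall>a\<in>Field r. \<exists>b\<in>A. (a, b) \<in> r)"

definition is_cofinality :: "'a set \<Rightarrow> 'k set \<Rightarrow> bool" where
  "is_cofinality T K \<equiv>
     (\<exists>A. cofinal_in |T| A \<and> |A| =o |K| ) \<and>
     (\<forall>A. cofinal_in |T| A \<longrightarrow> |K| \<le>o |A| )"

text \<open>Standing assumptions: theta = |T| singular of uncountable cofinality
  kappa = |K|, and th is an increasing kappa-sequence of cardinals (indexed by K in
  the order |K| ) converging to theta, with th at the least index above kappa.\<close>
definition standing :: "'a set \<Rightarrow> 'k set \<Rightarrow> ('k \<Rightarrow> 'c set) \<Rightarrow> bool" where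
  "standing T K th \<equiv>
     is_cofinality T K \<and>
     |K| <o |T| \<and>
     |UNIV :: nat set| <o |K| \<and>
     (\<forall>\<alpha>\<in>K. \<forall>\<beta>\<in>K. (\<alpha>, \<beta>) \<in> |K| \<and> \<alpha> \<noteq> \<beta> \<longrightarrow> |th \<alpha>| <o |th \<beta>| ) \<and>
     (\<forall>\<alpha>\<in>K. |th \<alpha>| <o |T| ) \<and>
     (\<forall>A :: 'a set. |A| <o |T| \<longrightarrow> (\<exists>\<alpha>\<in>K. |A| \<le>o |th \<alpha>| )) \<and>
     (\<forall>\<alpha>0\<in>K. (\<forall>\<beta>\<in>K. (\<alpha>0, \<beta>) \<in> |K| ) \<longrightarrow> |K| <o |th \<alpha>0| )"

definition theta_pair :: "'a set \<Rightarrow> ('a \<Rightarrow> nat set) \<Rightarrow> ('a \<Rightarrow> nat set) \<Rightarrow> bool" where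
  "theta_pair T a b \<equiv> \<forall>\<xi>\<in>T. \<forall>\<eta>\<in>T. finite (a \<xi> \<inter> b \<eta>)"

text \<open>a(x) = intersection of a_xi over xi in x; the empty intersection is UNIV = omega.\<close>
definition capf :: "('a \<Rightarrow> nat set) \<Rightarrow> 'a set \<Rightarrow> nat set" where
  "capf a x = (\<Inter>\<xi>\<in>x. a \<xi>)"

definition disj_fin_family :: "'a set \<Rightarrow> ('a \<Rightarrow> 'a set) \<Rightarrow> bool" where
  "disj_fin_family T x \<equiv>
     (\<forall>i\<in>T. finite (x i) \<and> x i \<subseteq> T) \<and>
     (\<forall>i\<in>T. \<forall>j\<in>T. i \<noteq> j \<longrightarrow> x i \<inter> x j = {})"

definition nice :: "'a set \<Rightarrow> ('a \<Rightarrow> nat set) \<Rightarrow> ('a \<Rightarrow> nat set) \<Rightarrow> bool" where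
  "nice T a b \<equiv> \<forall>x. disj_fin_family T x \<longrightarrow>
     (\<exists>i\<in>T. \<exists>j\<in>T. capf a (x i) \<inter> capf b (x j) \<noteq> {})"

definition X_sequence :: "'a set \<Rightarrow> 'k set \<Rightarrow> ('k \<Rightarrow> 'c set) \<Rightarrow>
    ('a \<Rightarrow> nat set) \<Rightarrow> ('a \<Rightarrow> nat set) \<Rightarrow> ('a \<Rightarrow> 'a set) \<Rightarrow> ('k \<Rightarrow> 'a set) \<Rightarrow> bool" where
  "X_sequence T K th a b x S \<equiv>
     (\<forall>\<alpha>\<in>K. S \<alpha> \<subseteq> T) \<and>
     (\<forall>\<alpha>\<in>K. \<forall>\<beta>\<in>K. \<alpha> \<noteq> \<beta> \<longrightarrow> S \<alpha> \<inter> S \<beta> = {}) \<and>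
     (\<forall>\<alpha>\<in>K. |th \<alpha>| <o |S \<alpha>| ) \<and>
     (\<forall>\<alpha>\<in>K. \<forall>i\<in>S \<alpha>. \<forall>j\<in>S \<alpha>. capf a (x i) \<inter> capf b (x j) = {})"

definition Q_order :: "'k set \<Rightarrow> ('a \<Rightarrow> nat set) \<Rightarrow> ('a \<Rightarrow> nat set) \<Rightarrow>
    ('a \<Rightarrow> 'a set) \<Rightarrow> ('k \<Rightarrow> 'a set) \<Rightarrow> 'k set set" where
  "Q_order K a b x S = {F. finite F \<and> F \<subseteq> K \<and>
     (\<forall>\<alpha>\<in>F. \<forall>\<beta>\<in>F. \<alpha> \<noteq> \<beta> \<longrightarrow>
        (\<exists>i\<in>S \<alpha>. \<exists>j\<in>S \<beta>. capf a (x i) \<inter> capf b (x j) \<noteq> {} \<or> capf b (x i) \<inter> capf a (x j) \<noteq> {}))}"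

text \<open>Partial orders are given as a carrier P with an order le; le p q means that q
  extends p (for Q(X,S): p \<subseteq> q). Two conditions are compatible iff they have a
  common extension in P.\<close>
definition compatible :: "'p set \<Rightarrow> ('p \<Rightarrow> 'p \<Rightarrow> bool) \<Rightarrow> 'p \<Rightarrow> 'p \<Rightarrow> bool" where
  "compatible P le p q \<equiv> \<exists>r\<in>P. le p r \<and> le q r"

definition antichain :: "'p set \<Rightarrow> ('p \<Rightarrow> 'p \<Rightarrow> bool) \<Rightarrow> 'p set \<Rightarrow> bool" where
  "antichain P le A \<equiv> A \<subseteq> P \<and> (\<forall>p\<in>A. \<forall>q\<in>A. p \<noteq> q \<longrightarrow> \<not> compatible P le p q)"

definition chain_condition :: "'p set \<Rightarrow> ('p \<Rightarrow> 'p \<Rightarrow> bool) \<Rightarrow> 'k set \<Rightarrow> bool" where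
  "chain_condition P le K \<equiv> \<forall>A. antichain P le A \<longrightarrow> |A| <o |K|"

definition prod_carrier :: "nat \<Rightarrow> (nat \<Rightarrow> 'p set) \<Rightarrow> (nat \<Rightarrow> 'p) set" where
  "prod_carrier n P = {p. (\<forall>l<n. p l \<in> P l) \<and> (\<forall>l\<ge>n. p l = undefined)}"

definition prod_le :: "nat \<Rightarrow> (nat \<Rightarrow> 'p \<Rightarrow> 'p \<Rightarrow> bool) \<Rightarrow> (nat \<Rightarrow> 'p) \<Rightarrow> (nat \<Rightarrow> 'p) \<Rightarrow> bool" where
  "prod_le n le p q \<equiv> \<forall>l<n. le l (p l) (q l)"

end

theory Submission
  imports Defs
begin

text \<open>
  (iii) gives (ii) by taking a product with a single factor. If the pair is not nice, a disjoint
  family X with all a(x_i) \<inter> b(x_j) empty, together with a partition of \<theta> into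
  \<kappa> pieces of size \<theta>, is an X-sequence in which any two indices are separated; so the
  singletons {\<alpha>} form an antichain of size \<kappa> in Q(X,S).

  Conversely, let the pair be nice and let A be an antichain of size \<kappa> in a product of n orders
  Q(X_l,S_l). Code a condition p as the finite set of pairs (l,\<alpha>) with \<alpha> \<in> p_l.
  As \<kappa> is regular and uncountable, the \<Delta>-system lemma leaves \<kappa> conditions whose
  remainders D_p over the root are pairwise disjoint and unbounded in \<kappa>. Inject the
  smallest of the sets S_d, d \<in> D_p, into all the others, and for each of its indices i
  take the union of the sets x chosen along D_p. Since the \<theta>_\<alpha> are cofinal in \<theta>, this gives
  at least \<theta> finite sets, each point lying in only finitely many of them, hence \<theta> pairwise
  disjoint ones, and niceness provides two of them, y and y', with a(y) \<inter> b(y') nonempty. Indices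
  inside a single S_d are separated, so y and y' come from distinct conditions p and q, and
  no coordinate of p - q is separated from one of q - p: p and q are compatible.
\<close>

section \<open>Cardinals below a regular cofinality\<close>

lemma not_card_of_ordLess_iff [simp]: "(\<not> |A| <o |B| ) \<longleftrightarrow> |B| \<le>o |A|"
  by (simp add: not_ordLess_iff_ordLeq card_of_Well_order)

lemma not_card_of_ordLeq_iff [simp]: "(\<not> |A| \<le>o |B| ) \<longleftrightarrow> |B| <o |A|"
  by (simp add: not_ordLeq_iff_ordLess card_of_Well_order)

lemma finite_card_of_ordLess_infinite: "finite A \<Longrightarrow> \<not> finite B \<Longrightarrow> |A| <o |B|"
  using finite_ordLess_infinite[OF card_of_Well_order card_of_Well_order] by (simp add: Field_card_of)

lemma card_of_ordLeq_inj: "inj_on f A \<Longrightarrow> f ` A \<subseteq> B \<Longrightarrow> |A| \<le>o |B|"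
  using card_of_ordLeq by blast

lemma ex_card_of_minimal:
  fixes f :: "'d \<Rightarrow> 'e set"
  assumes "D \<noteq> {}"
  shows "\<exists>m\<in>D. \<forall>d\<in>D. |f m| \<le>o |f d|"
  using exists_minim_Well_order[of "(\<lambda>d. |f d| ) ` D"] assms by (auto simp: card_of_Well_order)

lemma ex_block_injections:
  fixes S :: "'d \<Rightarrow> 'x set" and \<D> :: "'d set set"
  assumes nonempty: "\<forall>D\<in>\<D>. D \<noteq> {}"
  shows "\<exists>c G. \<forall>D\<in>\<D>. c D \<in> D \<and> (\<forall>d\<in>D. inj_on (G D d) (S (c D)) \<and> G D d ` S (c D) \<subseteq> S d)"
proof -
  have "\<exists>c\<in>D. \<exists>g. \<forall>d\<in>D. inj_on (g d) (S c) \<and> g d ` S c \<subseteq> S d" if D: "D \<in> \<D>" for D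
  proof -
    obtain c where c: "c \<in> D" "\<forall>d\<in>D. |S c| \<le>o |S d|"
      using ex_card_of_minimal[OF nonempty[rule_format, OF D], of S] by blast
    then have "\<forall>d\<in>D. \<exists>g. inj_on g (S c) \<and> g ` S c \<subseteq> S d"
      using card_of_ordLeq by blast
    then show ?thesis using c(1) by metis
  qed
  then show ?thesis by metis
qed

lemma subsingleton_finite: "\<forall>x\<in>X. \<forall>y\<in>X. x = y \<Longrightarrow> finite X"
  by (metis finite.simps subsetI singletonI subset_singletonD finite_subset)

lemma card_of_order_props:
  "trans |T|" "antisym |T|" "total_on T |T|" "refl_on T |T|"
  using card_of_well_order_on[of T]
  unfolding well_order_on_def linear_order_on_def partial_order_on_def preorder_on_def by auto

lemma bounded_if_card_of_ordLess_cofinality: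
  assumes cof: "is_cofinality T K" and B: "B \<subseteq> T" "|B| <o |K|"
  shows "\<exists>t\<in>T. \<forall>u\<in>B. (u, t) \<in> |T| \<and> u \<noteq> t"
proof -
  have "\<not> cofinal_in |T| B"
    using cof B(2) not_ordLess_ordLeq unfolding is_cofinality_def by blast
  then obtain t where t: "t \<in> T" "\<forall>u\<in>B. (t, u) \<notin> |T|"
    using B(1) unfolding cofinal_in_def Field_card_of by auto
  have "(u, t) \<in> |T| \<and> u \<noteq> t" if "u \<in> B" for u
    using t that B(1) card_of_order_props(3,4)[of T]
    unfolding total_on_def refl_on_def by (cases "u = t") auto
  then show ?thesis using t(1) by blast
qed

lemma cofinality_UNION_ordLess:
  fixes T :: "'a set" and K :: "'k set" and J :: "'j set" and G :: "'j \<Rightarrow> 'x set"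
  assumes cof: "is_cofinality T K"
    and J: "|J| <o |K|" and G: "\<forall>j\<in>J. |G j| <o |K|"
  shows "|\<Union>j\<in>J. G j| <o |K|"
proof (rule ccontr)
  let ?U = "\<Union>j\<in>J. G j"
  assume "\<not> |?U| <o |K|"
  then have KU: "|K| \<le>o |?U|" by simp
  from cof obtain A where A: "cofinal_in |T| A" "|A| =o |K|"
    unfolding is_cofinality_def by blast
  then have AT: "A \<subseteq> T" and A_cofinal: "\<forall>t\<in>T. \<exists>c\<in>A. (t, c) \<in> |T|"
    unfolding cofinal_in_def Field_card_of by auto
  show False
  proof (cases "A = {}")
    case True
    have "|{}::'a set| <o |K|"
      using card_of_empty[of J] J ordLeq_ordLess_trans by blast
    then show False
      using bounded_if_card_of_ordLess_cofinality[OF cof, of "{}"] A_cofinal True by auto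
  next
    case False
    have "|A| \<le>o |?U|" using A(2) KU ordIso_ordLeq_trans by blast
    then obtain g where g: "g ` ?U = A" using card_of_ordLeq2[OF False] by metis
    have "\<forall>j\<in>J. \<exists>t\<in>T. \<forall>u\<in>g ` G j. (u, t) \<in> |T| \<and> u \<noteq> t"
    proof
      fix j assume "j \<in> J"
      show "\<exists>t\<in>T. \<forall>u\<in>g ` G j. (u, t) \<in> |T| \<and> u \<noteq> t"
    proof (rule bounded_if_card_of_ordLess_cofinality[OF cof])
      show "g ` G j \<subseteq> T" using g AT \<open>j \<in> J\<close> by auto
      show "|g ` G j| <o |K|" using card_of_image G \<open>j \<in> J\<close> ordLeq_ordLess_trans by blast
    qed
    qed
    then obtain tt where tt: "\<forall>j\<in>J. tt j \<in> T \<and> (\<forall>u\<in>G j. (g u, tt j) \<in> |T| \<and> g u \<noteq> tt j)"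
      by (metis (no_types, lifting) bchoice image_eqI)
    have "tt ` J \<subseteq> T" using tt by blast
    moreover have "|tt ` J| <o |K|" using card_of_image J ordLeq_ordLess_trans by blast
    ultimately have "\<exists>s\<in>T. \<forall>t\<in>tt ` J. (t, s) \<in> |T| \<and> t \<noteq> s"
      by (rule bounded_if_card_of_ordLess_cofinality[OF cof])
    then obtain s where s: "s \<in> T" "\<forall>j\<in>J. (tt j, s) \<in> |T| \<and> tt j \<noteq> s" by auto
    obtain c where c: "c \<in> A" "(s, c) \<in> |T|" using A_cofinal s(1) by blast
    then obtain j u where ju: "j \<in> J" "u \<in> G j" "(s, g u) \<in> |T|"
      using g by auto
    have "(g u, tt j) \<in> |T|" using tt ju(1,2) by blast
    then have "(s, tt j) \<in> |T|" by (rule transD[OF card_of_order_props(1) ju(3)])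
    moreover have "(tt j, s) \<in> |T|" "tt j \<noteq> s" using s ju(1) by auto
    ultimately show False using antisymD[OF card_of_order_props(2)] by metis
  qed
qed

lemma cofinality_finite_Times_ordLess:
  assumes cof: "is_cofinality T K" and K: "\<not> finite K" and L: "finite L" and B: "|B| <o |K|"
  shows "|L \<times> B| <o |K|"
proof -
  have single: "|{l} \<times> B| \<le>o |B|" for l
  proof (rule card_of_ordLeq_inj[of snd])
    show "inj_on snd ({l} \<times> B)" by (rule inj_onI) auto
  qed auto
  have "L \<times> B = (\<Union>l\<in>L. {l} \<times> B)" by blast
  also have "|\<dots>| <o |K|"
    by (rule cofinality_UNION_ordLess[OF cof finite_card_of_ordLess_infinite[OF L K]])
      (intro ballI ordLeq_ordLess_trans[OF single B])
  finally show ?thesis .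
qed

lemma
  fixes T :: "'a set" and K :: "'k set" and th :: "'k \<Rightarrow> 'c set"
  assumes "standing T K th"
  shows standing_cofinality: "is_cofinality T K"
    and standing_uncountable_K: "|UNIV :: nat set| <o |K|"
    and standing_K_less_T: "|K| <o |T|"
    and standing_th_increasing:
      "\<And>\<alpha> \<beta>. \<alpha> \<in> K \<Longrightarrow> \<beta> \<in> K \<Longrightarrow> \<beta> \<in> aboveS |K| \<alpha> \<Longrightarrow> |th \<alpha>| <o |th \<beta>|"
    and standing_infinite_K: "\<not> finite K"
    and standing_infinite_T: "\<not> finite T"
proof -
  show "is_cofinality T K" "|UNIV :: nat set| <o |K|" "|K| <o |T|"
    using assms unfolding standing_def by auto
  show "|th \<alpha>| <o |th \<beta>|" if "\<alpha> \<in> K" "\<beta> \<in> K" "\<beta> \<in> aboveS |K| \<alpha>" for \<alpha> \<beta>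
    using assms that unfolding standing_def aboveS_def by auto
  show K: "\<not> finite K"
    using \<open>|UNIV :: nat set| <o |K|\<close> card_of_ordLeq_infinite ordLess_imp_ordLeq by blast
  show "\<not> finite T"
    using \<open>|K| <o |T|\<close> K card_of_ordLeq_infinite ordLess_imp_ordLeq by blast
qed

lemma standing_card_of_ordLess_bounded:
  fixes A :: "'x set"
  assumes st: "standing T K th" and A: "|A| <o |T|"
  shows "\<exists>\<alpha>\<in>K. |A| \<le>o |th \<alpha>|"
proof -
  obtain f where f: "inj_on f A" "f ` A \<subseteq> T"
    using A ordLess_imp_ordLeq card_of_ordLeq by metis
  have "|f ` A| <o |T|" using card_of_image A ordLeq_ordLess_trans by blast
  then obtain \<alpha> where "\<alpha> \<in> K" "|f ` A| \<le>o |th \<alpha>|"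
    using st unfolding standing_def by blast
  moreover have "|A| \<le>o |f ` A|" using card_of_ordLeq_inj[OF f(1)] by blast
  ultimately show ?thesis using ordLeq_transitive by blast
qed

lemma standing_card_of_Sigma_ge:
  fixes T :: "'a set" and K :: "'k set" and th :: "'k \<Rightarrow> 'c set" and C :: "'d \<Rightarrow> 'x set"
  assumes st: "standing T K th" and large: "\<forall>\<alpha>\<in>K. \<exists>D\<in>\<D>. |th \<alpha>| <o |C D|"
  shows "|T| \<le>o |Sigma \<D> C|"
proof (rule ccontr)
  assume "\<not> |T| \<le>o |Sigma \<D> C|"
  then obtain \<alpha> where \<alpha>: "\<alpha> \<in> K" "|Sigma \<D> C| \<le>o |th \<alpha>|"
    using standing_card_of_ordLess_bounded[OF st] by auto
  obtain D where D: "D \<in> \<D>" "|th \<alpha>| <o |C D|" using large \<alpha>(1) by blast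
  have "|C D| \<le>o |Sigma \<D> C|"
    by (rule card_of_ordLeq_inj[of "Pair D"]) (use D(1) in \<open>auto simp: inj_on_def\<close>)
  then have "|C D| <o |C D|"
    using ordLeq_transitive[OF _ \<alpha>(2)] ordLeq_ordLess_trans[OF _ D(2)] by blast
  then show False using ordLess_irreflexive by blast
qed

section \<open>Disjoint subfamilies and \<Delta>-systems\<close>

lemma ex_maximal_disjoint_subfamily:
  fixes y :: "'i \<Rightarrow> 'x set"
  shows "\<exists>M\<subseteq>I. (\<forall>i\<in>M. \<forall>j\<in>M. i \<noteq> j \<longrightarrow> y i \<inter> y j = {}) \<and>
           (\<forall>i\<in>I - M. \<exists>m\<in>M. y i \<inter> y m \<noteq> {})"
proof -
  let ?A = "{M. M \<subseteq> I \<and> (\<forall>i\<in>M. \<forall>j\<in>M. i \<noteq> j \<longrightarrow> y i \<inter> y j = {})}"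
  have "\<forall>C\<in>chains ?A. \<Union>C \<in> ?A"
  proof
    fix C assume C: "C \<in> chains ?A"
    have "\<Union>C \<subseteq> I" using chainsD2[OF C] by blast
    moreover have "\<forall>i\<in>\<Union>C. \<forall>j\<in>\<Union>C. i \<noteq> j \<longrightarrow> y i \<inter> y j = {}"
    proof (intro ballI impI)
      fix i j assume "i \<in> \<Union>C" "j \<in> \<Union>C" "i \<noteq> j"
      then obtain Mi Mj where "Mi \<in> C" "Mj \<in> C" "i \<in> Mi" "j \<in> Mj" by blast
      moreover have "Mi \<subseteq> Mj \<or> Mj \<subseteq> Mi" using chainsD[OF C] calculation by blast
      ultimately show "y i \<inter> y j = {}" using chainsD2[OF C] \<open>i \<noteq> j\<close> by blast
    qed
    ultimately show "\<Union>C \<in> ?A" by blast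
  qed
  from Zorn_Lemma[OF this] obtain M where M: "M \<in> ?A" and max: "\<forall>X\<in>?A. M \<subseteq> X \<longrightarrow> X = M"
    by blast
  have "\<exists>m\<in>M. y i \<inter> y m \<noteq> {}" if i: "i \<in> I - M" for i
  proof (rule ccontr)
    assume "\<not> (\<exists>m\<in>M. y i \<inter> y m \<noteq> {})"
    then have "insert i M \<in> ?A" using M i by (auto simp: Int_commute)
    then have "insert i M = M" using max[rule_format, OF _ subset_insertI] by blast
    then show False using i by blast
  qed
  then show ?thesis using M by blast
qed

lemma point_finite_disjoint_subfamily:
  fixes y :: "'i \<Rightarrow> 'x set"
  assumes I: "\<not> finite I" and y: "\<forall>z\<in>I. finite (y z) \<and> y z \<noteq> {}"
    and point_finite: "\<forall>\<xi>. finite {z\<in>I. \<xi> \<in> y z}"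
  shows "\<exists>M\<subseteq>I. (\<forall>i\<in>M. \<forall>j\<in>M. i \<noteq> j \<longrightarrow> y i \<inter> y j = {}) \<and> |I| \<le>o |M|"
proof -
  obtain M where M: "M \<subseteq> I" "\<forall>i\<in>M. \<forall>j\<in>M. i \<noteq> j \<longrightarrow> y i \<inter> y j = {}"
    and maximal: "\<forall>i\<in>I - M. \<exists>m\<in>M. y i \<inter> y m \<noteq> {}"
    using ex_maximal_disjoint_subfamily[of I y] by blast
  define N where "N m = (\<Union>\<xi>\<in>y m. {z\<in>I. \<xi> \<in> y z})" for m
  have N_finite: "finite (N m)" if "m \<in> M" for m
    unfolding N_def using y M(1) that point_finite by blast
  have cover: "I \<subseteq> (\<Union>m\<in>M. N m)"
  proof
    fix z assume z: "z \<in> I"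
    show "z \<in> (\<Union>m\<in>M. N m)"
    proof (cases "z \<in> M")
      case True
      then show ?thesis using y z unfolding N_def by blast
    next
      case False
      then obtain m where "m \<in> M" "y z \<inter> y m \<noteq> {}" using maximal z by blast
      then show ?thesis using z unfolding N_def by blast
    qed
  qed
  have M_infinite: "\<not> finite M"
  proof
    assume "finite M"
    then have "finite (\<Union>m\<in>M. N m)" using N_finite by blast
    then show False using I cover finite_subset by blast
  qed
  have "\<forall>m\<in>M. |N m| \<le>o |M|"
    using N_finite finite_card_of_ordLess_infinite[OF _ M_infinite] ordLess_imp_ordLeq by blast
  then have "|\<Union>m\<in>M. N m| \<le>o |M|"
    using card_of_UNION_ordLeq_infinite[OF M_infinite card_of_refl[THEN ordIso_imp_ordLeq]] by blast
  then have "|I| \<le>o |M|" using card_of_mono1[OF cover] ordLeq_transitive by blast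
  then show ?thesis using M by blast
qed

lemma light_family_disjoint_subfamily:
  fixes T :: "'a set" and K :: "'k set" and F :: "'x set set"
  assumes cof: "is_cofinality T K" and K: "\<not> finite K"
    and fin: "\<forall>E\<in>F. finite E" and size: "|K| \<le>o |F|"
    and light: "\<forall>\<xi>. |{E\<in>F. \<xi> \<in> E}| <o |K|"
  shows "\<exists>M\<subseteq>F. |K| \<le>o |M| \<and> (\<forall>E\<in>M. \<forall>E'\<in>M. E \<noteq> E' \<longrightarrow> E \<inter> E' = {})"
proof -
  obtain M where M: "M \<subseteq> F" "\<forall>E\<in>M. \<forall>E'\<in>M. E \<noteq> E' \<longrightarrow> E \<inter> E' = {}"
    and maximal: "\<forall>E\<in>F - M. \<exists>m\<in>M. E \<inter> m \<noteq> {}"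
    using ex_maximal_disjoint_subfamily[of F "\<lambda>E. E"] by auto
  have "|K| \<le>o |M|"
  proof (rule ccontr)
    assume "\<not> |K| \<le>o |M|"
    then have "|M| <o |K|" by simp
    moreover have "\<forall>m\<in>M. |m| <o |K|"
      using fin M(1) finite_card_of_ordLess_infinite[OF _ K] by blast
    ultimately have "|\<Union>m\<in>M. m| <o |K|" by (rule cofinality_UNION_ordLess[OF cof])
    then have meet: "|\<Union>\<xi>\<in>\<Union>M. {E\<in>F. \<xi> \<in> E}| <o |K|"
      using cofinality_UNION_ordLess[OF cof, of "\<Union>M" "\<lambda>\<xi>. {E\<in>F. \<xi> \<in> E}"] light by simp
    have "F \<subseteq> (\<Union>\<xi>\<in>\<Union>M. {E\<in>F. \<xi> \<in> E}) \<union> {{}}"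
    proof
      fix E assume E: "E \<in> F"
      show "E \<in> (\<Union>\<xi>\<in>\<Union>M. {E\<in>F. \<xi> \<in> E}) \<union> {{}}"
      proof (cases "E \<in> M")
        case True
        then show ?thesis using E by blast
      next
        case False
        then obtain m where "m \<in> M" "E \<inter> m \<noteq> {}" using maximal E by blast
        then show ?thesis using E by blast
      qed
    qed
    moreover have "|{{}} :: 'x set set| <o |K|"
      by (rule finite_card_of_ordLess_infinite[OF _ K]) simp
    then have "|(\<Union>\<xi>\<in>\<Union>M. {E\<in>F. \<xi> \<in> E}) \<union> {{}}| <o |K|"
      by (rule card_of_Un_ordLess_infinite[OF K meet])
    ultimately have "|F| <o |K|" by (rule card_of_mono1[THEN ordLeq_ordLess_trans])
    then show False using size not_ordLess_ordLeq by blast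
  qed
  with M show ?thesis by blast
qed

definition delta_system :: "'x set set \<Rightarrow> 'x set \<Rightarrow> bool" where
  "delta_system M R \<longleftrightarrow> (\<forall>E\<in>M. R \<subseteq> E) \<and> (\<forall>E\<in>M. \<forall>E'\<in>M. E \<noteq> E' \<longrightarrow> E \<inter> E' \<subseteq> R)"

lemma delta_system_insert: "delta_system M R \<Longrightarrow> delta_system (insert \<xi> ` M) (insert \<xi> R)"
  unfolding delta_system_def by blast

lemma
  assumes "delta_system M R"
  shows delta_system_remainders_inj: "inj_on (\<lambda>E. E - R) M"
    and delta_system_remainders_disjoint:
      "\<forall>D\<in>(\<lambda>E. E - R) ` M. \<forall>D'\<in>(\<lambda>E. E - R) ` M. D \<noteq> D' \<longrightarrow> D \<inter> D' = {}"
  using assms unfolding delta_system_def inj_on_def by blast+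

lemma delta_system_lemma_bounded_card:
  fixes T :: "'a set" and K :: "'k set" and F :: "'x set set"
  assumes cof: "is_cofinality T K" and K: "\<not> finite K"
    and F: "\<forall>E\<in>F. finite E \<and> card E \<le> n" "|K| \<le>o |F|"
  shows "\<exists>M R. M \<subseteq> F \<and> |K| \<le>o |M| \<and> delta_system M R"
  using F
proof (induction n arbitrary: F)
  case 0
  have light: "|{E\<in>F. \<xi> \<in> E}| <o |K|" for \<xi>
  proof -
    have no_member: "{E\<in>F. \<xi> \<in> E} = {}" using 0 by auto
    show ?thesis unfolding no_member by (rule finite_card_of_ordLess_infinite[OF finite.emptyI K])
  qed
  have "\<forall>E\<in>F. finite E" using 0(1) by simp
  from light_family_disjoint_subfamily[OF cof K this 0(2) allI[OF light]]
  obtain M where "M \<subseteq> F" "|K| \<le>o |M|" "\<forall>E\<in>M. \<forall>E'\<in>M. E \<noteq> E' \<longrightarrow> E \<inter> E' = {}"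
    by blast
  then show ?case unfolding delta_system_def by (intro exI[of _ M] exI[of _ "{}"]) auto
next
  case (Suc n)
  show ?case
  proof (cases "\<forall>\<xi>. |{E\<in>F. \<xi> \<in> E}| <o |K|")
    case True
    moreover have "\<forall>E\<in>F. finite E" using Suc.prems(1) by simp
    ultimately obtain M where "M \<subseteq> F" "|K| \<le>o |M|" "\<forall>E\<in>M. \<forall>E'\<in>M. E \<noteq> E' \<longrightarrow> E \<inter> E' = {}"
      using light_family_disjoint_subfamily[OF cof K _ Suc.prems(2)] by blast
    then show ?thesis unfolding delta_system_def by (intro exI[of _ M] exI[of _ "{}"]) auto
  next
    case False
    then obtain \<xi> where heavy: "|K| \<le>o |{E\<in>F. \<xi> \<in> E}|" by auto
    let ?F' = "(\<lambda>E. E - {\<xi>}) ` {E\<in>F. \<xi> \<in> E}"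
    have "inj_on (\<lambda>E. E - {\<xi>}) {E\<in>F. \<xi> \<in> E}" unfolding inj_on_def by blast
    then have "|{E\<in>F. \<xi> \<in> E}| \<le>o |?F'|" by (rule card_of_ordLeq_inj) simp
    then have size': "|K| \<le>o |?F'|" by (rule ordLeq_transitive[OF heavy])
    have "\<forall>E\<in>?F'. finite E \<and> card E \<le> n"
    proof
      fix E' assume "E' \<in> ?F'"
      then obtain E where E: "E \<in> F" "\<xi> \<in> E" "E' = E - {\<xi>}" by blast
      then have "finite E" "card E \<le> Suc n" using Suc.prems(1) by auto
      then show "finite E' \<and> card E' \<le> n" using E by (simp add: card_Diff_singleton)
    qed
    from Suc.IH[OF this size'] obtain M R where M: "M \<subseteq> ?F'" "|K| \<le>o |M|" "delta_system M R"
      by blast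
    have "inj_on (insert \<xi>) M" using M(1) unfolding inj_on_def by blast
    then have "|M| \<le>o |insert \<xi> ` M|" by (rule card_of_ordLeq_inj) simp
    then have "|K| \<le>o |insert \<xi> ` M|" by (rule ordLeq_transitive[OF M(2)])
    moreover have "insert \<xi> ` M \<subseteq> F"
    proof
      fix X assume "X \<in> insert \<xi> ` M"
      then obtain E where "E \<in> F" "\<xi> \<in> E" "X = insert \<xi> (E - {\<xi>})" using M(1) by blast
      then show "X \<in> F" by (simp add: insert_absorb)
    qed
    moreover have "delta_system (insert \<xi> ` M) (insert \<xi> R)" by (rule delta_system_insert[OF M(3)])
    ultimately show ?thesis by blast
  qed
qed

lemma delta_system_lemma:
  fixes T :: "'a set" and K :: "'k set" and F :: "'x set set"
  assumes cof: "is_cofinality T K" and K: "|UNIV :: nat set| <o |K|"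
    and F: "\<forall>E\<in>F. finite E" "|K| \<le>o |F|"
  shows "\<exists>M R. M \<subseteq> F \<and> |K| \<le>o |M| \<and> delta_system M R"
proof -
  have K_infinite: "\<not> finite K"
    using card_of_ordLeq_infinite[OF ordLess_imp_ordLeq[OF K]] by simp
  have "\<exists>n. |K| \<le>o |{E\<in>F. card E \<le> n}|"
  proof (rule ccontr)
    assume "\<nexists>n. |K| \<le>o |{E\<in>F. card E \<le> n}|"
    then have "\<forall>n\<in>UNIV. |{E\<in>F. card E \<le> n}| <o |K|" by simp
    then have "|\<Union>n. {E\<in>F. card E \<le> n}| <o |K|"
      by (rule cofinality_UNION_ordLess[OF cof K])
    moreover have "(\<Union>n. {E\<in>F. card E \<le> n}) = F" by auto
    ultimately show False using F(2) not_ordLess_ordLeq by metis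
  qed
  then obtain n where n: "|K| \<le>o |{E\<in>F. card E \<le> n}|" by blast
  have "\<forall>E\<in>{E\<in>F. card E \<le> n}. finite E \<and> card E \<le> n" using F(1) by simp
  from delta_system_lemma_bounded_card[OF cof K_infinite this n] obtain M R
    where "M \<subseteq> {E\<in>F. card E \<le> n}" "|K| \<le>o |M|" "delta_system M R"
    by blast
  then show ?thesis by (intro exI[of _ M] exI[of _ R]) auto
qed

lemma disjoint_family_unbounded_member:
  fixes T :: "'a set" and K :: "'k set" and \<D> :: "('l \<times> 'k) set set"
  assumes cof: "is_cofinality T K" and K: "\<not> finite K" and L: "finite L"
    and sub: "\<forall>D\<in>\<D>. D \<subseteq> L \<times> K"
    and disj: "\<forall>D\<in>\<D>. \<forall>D'\<in>\<D>. D \<noteq> D' \<longrightarrow> D \<inter> D' = {}"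
    and size: "|K| \<le>o |\<D>|" and \<alpha>: "\<alpha> \<in> K"
  shows "\<exists>D\<in>\<D>. D \<noteq> {} \<and> snd ` D \<subseteq> aboveS |K| \<alpha>"
proof -
  define B where "B = insert \<alpha> (underS |K| \<alpha>)"
  have "|{\<alpha>}| <o |K|" by (rule finite_card_of_ordLess_infinite[OF _ K]) simp
  moreover have "|underS |K| \<alpha>| <o |K|"
    using card_of_underS[OF card_of_Card_order, of \<alpha> K] \<alpha> by (simp add: Field_card_of)
  ultimately have "|{\<alpha>} \<union> underS |K| \<alpha>| <o |K|" by (rule card_of_Un_ordLess_infinite[OF K])
  then have B_small: "|B| <o |K|" unfolding B_def by simp
  have LB_small: "|L \<times> B| <o |K|" by (rule cofinality_finite_Times_ordLess[OF cof K L B_small])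
  define bad where "bad = {D\<in>\<D>. D \<inter> (L \<times> B) \<noteq> {}}"
  define pick where "pick D = (SOME d. d \<in> D \<inter> (L \<times> B))" for D
  have pick: "pick D \<in> D \<inter> (L \<times> B)" if "D \<in> bad" for D
    using that some_in_eq[of "D \<inter> (L \<times> B)"] unfolding bad_def pick_def by blast
  have "inj_on pick bad"
  proof (rule inj_onI)
    fix D D' assume D: "D \<in> bad" "D' \<in> bad" "pick D = pick D'"
    then have "pick D \<in> D \<inter> D'" using pick by (metis IntD1 IntI)
    then show "D = D'" using disj D(1,2) unfolding bad_def by blast
  qed
  then have "|bad| \<le>o |L \<times> B|" by (rule card_of_ordLeq_inj) (use pick in blast)
  then have "|bad| <o |K|" using LB_small by (rule ordLeq_ordLess_trans)
  moreover have "|{{}} :: ('l \<times> 'k) set set| <o |K|"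
    by (rule finite_card_of_ordLess_infinite[OF _ K]) simp
  ultimately have "|{{}} \<union> bad| <o |K|" by (rule card_of_Un_ordLess_infinite[OF K, rotated])
  then have "\<not> \<D> \<subseteq> {{}} \<union> bad"
    using size ordLeq_ordLess_trans[OF card_of_mono1] not_ordLess_ordLeq by metis
  then obtain D where D: "D \<in> \<D>" "D \<noteq> {}" "D \<inter> (L \<times> B) = {}"
    unfolding bad_def by blast
  have "snd d \<in> aboveS |K| \<alpha>" if "d \<in> D" for d
  proof -
    have "d \<in> L \<times> K" using D(1) sub that by blast
    then have "snd d \<in> K" "fst d \<in> L" by (simp_all add: mem_Times_iff)
    moreover have "snd d \<notin> B" using D(3) that \<open>fst d \<in> L\<close> by (metis IntI empty_iff mem_Times_iff)
    ultimately show ?thesis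
      using card_of_order_props(3)[of K] \<alpha>
      unfolding B_def underS_def aboveS_def total_on_def by auto
  qed
  then show ?thesis using D by blast
qed

section \<open>The orders Q(X,S) and their finite products\<close>

definition separated ::
    "('a \<Rightarrow> nat set) \<Rightarrow> ('a \<Rightarrow> nat set) \<Rightarrow> ('a \<Rightarrow> 'a set) \<Rightarrow> ('k \<Rightarrow> 'a set) \<Rightarrow> 'k \<Rightarrow> 'k \<Rightarrow> bool"
  where "separated a b x S \<alpha> \<beta> \<longleftrightarrow> (\<forall>i\<in>S \<alpha>. \<forall>j\<in>S \<beta>. capf a (x i) \<inter> capf b (x j) = {})"

lemma capf_antimono: "x \<subseteq> y \<Longrightarrow> capf a y \<subseteq> capf a x"
  unfolding capf_def by blast

lemma mem_Q_order_iff: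
  "F \<in> Q_order K a b x S \<longleftrightarrow> finite F \<and> F \<subseteq> K \<and>
     (\<forall>\<alpha>\<in>F. \<forall>\<beta>\<in>F. \<alpha> \<noteq> \<beta> \<longrightarrow> \<not> separated a b x S \<alpha> \<beta> \<or> \<not> separated a b x S \<beta> \<alpha>)"
  unfolding Q_order_def separated_def by (simp add: Int_commute, blast)

lemma X_sequence_separated:
  "X_sequence T K th a b x S \<Longrightarrow> \<alpha> \<in> K \<Longrightarrow> separated a b x S \<alpha> \<alpha>"
  unfolding X_sequence_def separated_def by blast

lemma X_sequence_nonempty:
  assumes "X_sequence T K th a b x S" "\<alpha> \<in> K" "i \<in> S \<alpha>"
  shows "x i \<noteq> {}"
proof
  assume "x i = {}"
  then have "capf a (x i) \<inter> capf b (x i) = UNIV" unfolding capf_def by simp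
  then show False using assms unfolding X_sequence_def by blast
qed

lemma Q_order_Un:
  assumes "p \<in> Q_order K a b x S" "q \<in> Q_order K a b x S"
    and "\<forall>\<alpha>\<in>p - q. \<forall>\<beta>\<in>q - p. \<not> separated a b x S \<alpha> \<beta>"
  shows "p \<union> q \<in> Q_order K a b x S"
proof -
  let ?sep = "separated a b x S"
  have "\<not> ?sep \<alpha> \<beta> \<or> \<not> ?sep \<beta> \<alpha>"
    if \<alpha>\<beta>: "\<alpha> \<in> p \<union> q" "\<beta> \<in> p \<union> q" "\<alpha> \<noteq> \<beta>" for \<alpha> \<beta>
  proof -
    consider "\<alpha> \<in> p" "\<beta> \<in> p" | "\<alpha> \<in> q" "\<beta> \<in> q" | "\<alpha> \<in> p - q" "\<beta> \<in> q - p"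
      | "\<alpha> \<in> q - p" "\<beta> \<in> p - q"
      using \<alpha>\<beta>(1,2) by blast
    then show ?thesis
      by cases (use assms \<alpha>\<beta>(3) in \<open>auto simp: mem_Q_order_iff\<close>)
  qed
  moreover have "finite (p \<union> q)" "p \<union> q \<subseteq> K" using assms(1,2) by (simp_all add: mem_Q_order_iff)
  ultimately show ?thesis unfolding mem_Q_order_iff by blast
qed

lemma prod_incompatible_separated:
  fixes n :: nat and K :: "'k set" and a b :: "'a \<Rightarrow> nat set"
    and xs :: "nat \<Rightarrow> 'a \<Rightarrow> 'a set" and Ss :: "nat \<Rightarrow> 'k \<Rightarrow> 'a set"
  defines "P \<equiv> prod_carrier n (\<lambda>l. Q_order K a b (xs l) (Ss l))"
  assumes p: "p \<in> P" and q: "q \<in> P"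
    and incompatible: "\<not> compatible P (prod_le n (\<lambda>l. (\<subseteq>))) p q"
  shows "\<exists>l<n. \<exists>\<alpha>\<in>p l - q l. \<exists>\<beta>\<in>q l - p l. separated a b (xs l) (Ss l) \<alpha> \<beta>"
proof (rule ccontr)
  assume not_separated: "\<not> ?thesis"
  have "p l \<union> q l \<in> Q_order K a b (xs l) (Ss l)" if "l < n" for l
  proof (intro Q_order_Un)
    show "p l \<in> Q_order K a b (xs l) (Ss l)" "q l \<in> Q_order K a b (xs l) (Ss l)"
      using p q that unfolding P_def prod_carrier_def by auto
  qed (use not_separated that in blast)
  then have "(\<lambda>l. if l < n then p l \<union> q l else undefined) \<in> P"
    unfolding P_def prod_carrier_def by simp
  moreover have "prod_le n (\<lambda>l. (\<subseteq>)) p (\<lambda>l. if l < n then p l \<union> q l else undefined)"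
    "prod_le n (\<lambda>l. (\<subseteq>)) q (\<lambda>l. if l < n then p l \<union> q l else undefined)"
    unfolding prod_le_def by auto
  ultimately show False using incompatible unfolding compatible_def by blast
qed

text \<open>This relies on the junk value: conditions are \<^const>\<open>undefined\<close> at coordinates \<open>l \<ge> n\<close>.\<close>

lemma inj_on_Sigma_prod_carrier: "inj_on (\<lambda>p. Sigma {..<n} p) (prod_carrier n P)"
proof (rule inj_onI)
  fix p q assume pq: "p \<in> prod_carrier n P" "q \<in> prod_carrier n P"
    and eq: "Sigma {..<n} p = Sigma {..<n} q"
  show "p = q"
  proof
    fix l show "p l = q l"
    proof (cases "l < n")
      case True
      then show ?thesis using eq by (auto simp: set_eq_iff)
    next
      case False
      then show ?thesis using pq unfolding prod_carrier_def by simp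
    qed
  qed
qed

lemma chain_condition_of_prod_carrier_1:
  fixes P :: "'p set"
  assumes "chain_condition (prod_carrier 1 (\<lambda>_. P)) (prod_le 1 (\<lambda>_. le)) K"
  shows "chain_condition P le K"
  unfolding chain_condition_def
proof (intro allI impI)
  fix A assume A: "antichain P le A"
  define e where "e p = (\<lambda>l::nat. if l = 0 then p else undefined)" for p :: 'p
  have e_inj: "inj_on e A"
    by (rule inj_onI) (metis e_def)
  have "antichain (prod_carrier 1 (\<lambda>_. P)) (prod_le 1 (\<lambda>_. le)) (e ` A)"
    unfolding antichain_def
  proof (intro conjI ballI impI)
    show "e ` A \<subseteq> prod_carrier 1 (\<lambda>_. P)"
      using A unfolding antichain_def prod_carrier_def e_def by auto
  next
    fix p' q' assume "p' \<in> e ` A" "q' \<in> e ` A" "p' \<noteq> q'"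
    then obtain p q where pq: "p \<in> A" "q \<in> A" "p' = e p" "q' = e q" "p \<noteq> q" by blast
    show "\<not> compatible (prod_carrier 1 (\<lambda>_. P)) (prod_le 1 (\<lambda>_. le)) p' q'"
    proof
      assume "compatible (prod_carrier 1 (\<lambda>_. P)) (prod_le 1 (\<lambda>_. le)) p' q'"
      then obtain r where "r 0 \<in> P" "le p (r 0)" "le q (r 0)"
        unfolding compatible_def prod_carrier_def prod_le_def pq e_def by auto
      then show False using A pq unfolding antichain_def compatible_def by blast
    qed
  qed
  then have "|e ` A| <o |K|" using assms unfolding chain_condition_def by blast
  moreover have "|A| \<le>o |e ` A|" by (rule card_of_ordLeq_inj[OF e_inj]) simp
  ultimately show "|A| <o |K|" by (rule ordLeq_ordLess_trans[rotated])
qed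

lemma ex_disjoint_parts_of_full_card:
  fixes T :: "'a set" and K :: "'k set"
  assumes T: "\<not> finite T" and K: "|K| \<le>o |T|"
  shows "\<exists>S. (\<forall>\<alpha>\<in>K. S \<alpha> \<subseteq> T \<and> |T| \<le>o |S \<alpha>| ) \<and> (\<forall>\<alpha>\<in>K. \<forall>\<beta>\<in>K. \<alpha> \<noteq> \<beta> \<longrightarrow> S \<alpha> \<inter> S \<beta> = {})"
proof (cases "K = {}")
  case False
  then have "|K \<times> T| =o |T|" by (rule card_of_Times_infinite_simps(3)[OF T _ K])
  then obtain \<phi> where \<phi>: "bij_betw \<phi> (K \<times> T) T" using card_of_ordIso by blast
  then have \<phi>_inj: "inj_on \<phi> (K \<times> T)" by (rule bij_betw_imp_inj_on)
  define S where "S \<alpha> = \<phi> ` ({\<alpha>} \<times> T)" for \<alpha>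
  have "S \<alpha> \<subseteq> T" if "\<alpha> \<in> K" for \<alpha>
    using \<phi> that unfolding S_def bij_betw_def by auto
  moreover have "|T| \<le>o |S \<alpha>|" if "\<alpha> \<in> K" for \<alpha>
  proof (rule card_of_ordLeq_inj)
    show "inj_on (\<lambda>t. \<phi> (\<alpha>, t)) T" using \<phi>_inj that unfolding inj_on_def by blast
  qed (auto simp: S_def)
  moreover have "S \<alpha> \<inter> S \<beta> = {}" if "\<alpha> \<in> K" "\<beta> \<in> K" "\<alpha> \<noteq> \<beta>" for \<alpha> \<beta>
    using \<phi>_inj that unfolding S_def inj_on_def by blast
  ultimately show ?thesis by blast
qed simp

lemma not_nice_not_chain_condition:
  fixes T :: "'a set" and K :: "'k set" and th :: "'k \<Rightarrow> 'c set"
  assumes st: "standing T K th" and not_nice: "\<not> nice T a b"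
  shows "\<exists>x S. disj_fin_family T x \<and> X_sequence T K th a b x S \<and>
           \<not> chain_condition (Q_order K a b x S) (\<subseteq>) K"
proof -
  obtain x where x: "disj_fin_family T x"
    and empty: "\<forall>i\<in>T. \<forall>j\<in>T. capf a (x i) \<inter> capf b (x j) = {}"
    using not_nice unfolding nice_def by blast
  obtain S where S: "\<forall>\<alpha>\<in>K. S \<alpha> \<subseteq> T \<and> |T| \<le>o |S \<alpha>|"
    "\<forall>\<alpha>\<in>K. \<forall>\<beta>\<in>K. \<alpha> \<noteq> \<beta> \<longrightarrow> S \<alpha> \<inter> S \<beta> = {}"
    using ex_disjoint_parts_of_full_card[OF standing_infinite_T[OF st]
        ordLess_imp_ordLeq[OF standing_K_less_T[OF st]]] by blast
  have all_separated: "separated a b x S \<alpha> \<beta>" if "\<alpha> \<in> K" "\<beta> \<in> K" for \<alpha> \<beta>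
    using empty S(1) that unfolding separated_def by blast
  have "|th \<alpha>| <o |S \<alpha>|" if "\<alpha> \<in> K" for \<alpha>
    using st S(1) that ordLess_ordLeq_trans unfolding standing_def by blast
  then have XS: "X_sequence T K th a b x S"
    unfolding X_sequence_def using S empty by blast
  have "antichain (Q_order K a b x S) (\<subseteq>) ((\<lambda>\<alpha>. {\<alpha>}) ` K)"
    unfolding antichain_def compatible_def
    using all_separated by (auto simp: mem_Q_order_iff) (meson subsetD)
  moreover have "|K| \<le>o |(\<lambda>\<alpha>. {\<alpha>}) ` K|" by (rule card_of_ordLeq_inj) auto
  ultimately have "\<not> chain_condition (Q_order K a b x S) (\<subseteq>) K"
    unfolding chain_condition_def using not_ordLess_ordLeq by blast
  with x XS show ?thesis by blast
qed

section \<open>Niceness and the chain condition\<close>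

lemma nice_point_finite_family:
  fixes T :: "'a set" and y :: "'i \<Rightarrow> 'a set"
  assumes nice: "nice T a b" and T: "\<not> finite T"
    and y: "\<forall>z\<in>I. finite (y z) \<and> y z \<noteq> {} \<and> y z \<subseteq> T"
    and point_finite: "\<forall>\<xi>. finite {z\<in>I. \<xi> \<in> y z}" and size: "|T| \<le>o |I|"
  shows "\<exists>z\<in>I. \<exists>z'\<in>I. capf a (y z) \<inter> capf b (y z') \<noteq> {}"
proof -
  have "\<not> finite I" using card_of_ordLeq_finite[OF size] T by blast
  moreover have "\<forall>z\<in>I. finite (y z) \<and> y z \<noteq> {}" using y by blast
  ultimately obtain M where M: "M \<subseteq> I" "\<forall>i\<in>M. \<forall>j\<in>M. i \<noteq> j \<longrightarrow> y i \<inter> y j = {}" "|I| \<le>o |M|"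
    using point_finite_disjoint_subfamily[of I y] point_finite by blast
  have "|T| \<le>o |M|" by (rule ordLeq_transitive[OF size M(3)])
  then obtain h where h: "inj_on h T" "h ` T \<subseteq> M" using card_of_ordLeq by metis
  have "disj_fin_family T (\<lambda>t. y (h t))"
    unfolding disj_fin_family_def
  proof (intro conjI ballI impI)
    fix t t' assume t: "t \<in> T" "t' \<in> T" "t \<noteq> t'"
    then have "h t \<noteq> h t'" using inj_onD[OF h(1)] by metis
    moreover have "h t \<in> M" "h t' \<in> M" using h(2) t by blast+
    ultimately show "y (h t) \<inter> y (h t') = {}" using M(2) by blast
  qed (use h M(1) y in blast)+
  then obtain t t' where "t \<in> T" "t' \<in> T" "capf a (y (h t)) \<inter> capf b (y (h t')) \<noteq> {}"
    using nice unfolding nice_def by blast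
  then show ?thesis using h(2) M(1) by blast
qed

definition amalgam ::
    "(nat \<Rightarrow> 'a \<Rightarrow> 'a set) \<Rightarrow> ((nat \<times> 'k) set \<Rightarrow> nat \<times> 'k \<Rightarrow> 'a \<Rightarrow> 'a) \<Rightarrow> (nat \<times> 'k) set \<Rightarrow> 'a \<Rightarrow> 'a set"
  where "amalgam xs G D i = (\<Union>d\<in>D. xs (fst d) (G D d i))"

lemma amalgam_meets_not_separated:
  assumes meet: "capf a (amalgam xs G D i) \<inter> capf b (amalgam xs G D' j) \<noteq> {}"
    and d: "d \<in> D" "G D d i \<in> Ss (fst d) (snd d)"
    and e: "e \<in> D'" "G D' e j \<in> Ss (fst d) (snd e)" "fst e = fst d"
  shows "\<not> separated a b (xs (fst d)) (Ss (fst d)) (snd d) (snd e)"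
proof -
  have "capf a (amalgam xs G D i) \<subseteq> capf a (xs (fst d) (G D d i))"
    by (rule capf_antimono) (use d(1) in \<open>auto simp: amalgam_def\<close>)
  moreover have "capf b (amalgam xs G D' j) \<subseteq> capf b (xs (fst d) (G D' e j))"
    by (rule capf_antimono) (use e(1,3) in \<open>force simp: amalgam_def\<close>)
  ultimately have "capf a (xs (fst d) (G D d i)) \<inter> capf b (xs (fst d) (G D' e j)) \<noteq> {}"
    using meet Int_mono subset_empty by metis
  then show ?thesis using d(2) e(2) unfolding separated_def by blast
qed

lemma amalgam_finite_nonempty_subset:
  fixes xs :: "nat \<Rightarrow> 'a \<Rightarrow> 'a set" and Ss :: "nat \<Rightarrow> 'k \<Rightarrow> 'a set"
  assumes fam: "\<forall>l<n. disj_fin_family T (xs l) \<and> X_sequence T K th a b (xs l) (Ss l)"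
    and D: "finite D" "D \<noteq> {}" "D \<subseteq> {..<n} \<times> K"
    and G: "\<forall>d\<in>D. G D d i \<in> Ss (fst d) (snd d)"
  shows "finite (amalgam xs G D i) \<and> amalgam xs G D i \<noteq> {} \<and> amalgam xs G D i \<subseteq> T"
proof -
  have "finite (xs (fst d) (G D d i)) \<and> xs (fst d) (G D d i) \<subseteq> T \<and> xs (fst d) (G D d i) \<noteq> {}"
    if "d \<in> D" for d
  proof -
    have "d \<in> {..<n} \<times> K" using D(3) that by blast
    then have d: "fst d < n" "snd d \<in> K" by (simp_all add: mem_Times_iff)
    then have XS: "X_sequence T K th a b (xs (fst d)) (Ss (fst d))" "disj_fin_family T (xs (fst d))"
      using fam by blast+
    have s: "G D d i \<in> Ss (fst d) (snd d)" using G that by blast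
    then have "G D d i \<in> T" using XS(1) d(2) unfolding X_sequence_def by blast
    then show ?thesis
      using XS(2) X_sequence_nonempty[OF XS(1) d(2) s] unfolding disj_fin_family_def by blast
  qed
  then show ?thesis using D(1,2) unfolding amalgam_def by blast
qed

lemma amalgam_point_finite:
  fixes xs :: "nat \<Rightarrow> 'a \<Rightarrow> 'a set" and Ss :: "nat \<Rightarrow> 'k \<Rightarrow> 'a set"
  assumes xs: "\<forall>l<n. \<forall>i\<in>T. \<forall>j\<in>T. i \<noteq> j \<longrightarrow> xs l i \<inter> xs l j = {}"
    and Ss: "\<forall>l<n. \<forall>\<alpha>\<in>K. Ss l \<alpha> \<subseteq> T" "\<forall>l<n. \<forall>\<alpha>\<in>K. \<forall>\<beta>\<in>K. \<alpha> \<noteq> \<beta> \<longrightarrow> Ss l \<alpha> \<inter> Ss l \<beta> = {}"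
    and \<D>: "\<forall>D\<in>\<D>. D \<subseteq> {..<n} \<times> K" "\<forall>D\<in>\<D>. \<forall>D'\<in>\<D>. D \<noteq> D' \<longrightarrow> D \<inter> D' = {}"
    and G: "\<forall>D\<in>\<D>. \<forall>d\<in>D. inj_on (G D d) (C D) \<and> G D d ` C D \<subseteq> Ss (fst d) (snd d)"
  shows "finite {z\<in>Sigma \<D> C. \<xi> \<in> amalgam xs G (fst z) (snd z)}"
proof -
  define V where "V l = {z\<in>Sigma \<D> C. \<exists>d\<in>fst z. fst d = l \<and> \<xi> \<in> xs l (G (fst z) d (snd z))}" for l
  have "{z\<in>Sigma \<D> C. \<xi> \<in> amalgam xs G (fst z) (snd z)} \<subseteq> (\<Union>l<n. V l)"
  proof
    fix z assume "z \<in> {z\<in>Sigma \<D> C. \<xi> \<in> amalgam xs G (fst z) (snd z)}"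
    then obtain d where d: "z \<in> Sigma \<D> C" "d \<in> fst z" "\<xi> \<in> xs (fst d) (G (fst z) d (snd z))"
      unfolding amalgam_def by blast
    then have "z \<in> V (fst d)" unfolding V_def by blast
    moreover have "d \<in> {..<n} \<times> K" using \<D>(1) d(1,2) by auto
    ultimately show "z \<in> (\<Union>l<n. V l)" by (auto simp: mem_Times_iff)
  qed
  moreover have "finite (V l)" if "l < n" for l
  proof (rule subsingleton_finite, intro ballI)
    fix z z' assume "z \<in> V l" "z' \<in> V l"
    then obtain d d' where z: "z \<in> Sigma \<D> C" "d \<in> fst z" "fst d = l" "\<xi> \<in> xs l (G (fst z) d (snd z))"
      and z': "z' \<in> Sigma \<D> C" "d' \<in> fst z'" "fst d' = l" "\<xi> \<in> xs l (G (fst z') d' (snd z'))"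
      unfolding V_def by blast
    have \<D>_z: "fst z \<in> \<D>" "snd z \<in> C (fst z)" "fst z' \<in> \<D>" "snd z' \<in> C (fst z')"
      using z(1) z'(1) by (cases z, cases z', simp)+
    have G_z: "inj_on (G (fst z) d) (C (fst z))" "G (fst z) d ` C (fst z) \<subseteq> Ss l (snd d)"
      using G \<D>_z(1) z(2,3) by auto
    have G_z': "G (fst z') d' ` C (fst z') \<subseteq> Ss l (snd d')"
      using G \<D>_z(3) z'(2,3) by auto
    have in_S: "G (fst z) d (snd z) \<in> Ss l (snd d)" "G (fst z') d' (snd z') \<in> Ss l (snd d')"
      using G_z(2) G_z' \<D>_z(2,4) by blast+
    have "d \<in> {..<n} \<times> K" "d' \<in> {..<n} \<times> K" using \<D>(1) \<D>_z(1,3) z(2) z'(2) by blast+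
    then have K: "snd d \<in> K" "snd d' \<in> K" by (simp_all add: mem_Times_iff)
    have T: "G (fst z) d (snd z) \<in> T" "G (fst z') d' (snd z') \<in> T"
      using Ss(1)[rule_format, OF that K(1)] Ss(1)[rule_format, OF that K(2)] in_S by blast+
    have same_G: "G (fst z) d (snd z) = G (fst z') d' (snd z')"
    proof (rule ccontr)
      assume "G (fst z) d (snd z) \<noteq> G (fst z') d' (snd z')"
      from xs[rule_format, OF that T this] show False using z(4) z'(4) by blast
    qed
    have "snd d = snd d'"
    proof (rule ccontr)
      assume "snd d \<noteq> snd d'"
      from Ss(2)[rule_format, OF that K this] show False using in_S(1) in_S(2)[folded same_G] by blast
    qed
    then have "d = d'" using z(3) z'(3) by (simp add: prod_eq_iff)
    have "fst z = fst z'"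
    proof (rule ccontr)
      assume "fst z \<noteq> fst z'"
      from \<D>(2)[rule_format, OF \<D>_z(1,3) this] show False using z(2) z'(2) \<open>d = d'\<close> by blast
    qed
    moreover have "snd z = snd z'"
      using inj_onD[OF G_z(1) _ \<D>_z(2)] same_G \<D>_z(4) \<open>d = d'\<close> calculation by simp
    ultimately show "z = z'" by (simp add: prod_eq_iff)
  qed
  ultimately show ?thesis by (simp add: finite_subset)
qed

lemma nice_amalgams_meet:
  fixes T :: "'a set" and K :: "'k set" and th :: "'k \<Rightarrow> 'c set" and \<D> :: "(nat \<times> 'k) set set"
    and xs :: "nat \<Rightarrow> 'a \<Rightarrow> 'a set" and Ss :: "nat \<Rightarrow> 'k \<Rightarrow> 'a set"
  assumes st: "standing T K th" and nice: "nice T a b"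
    and fam: "\<forall>l<n. disj_fin_family T (xs l) \<and> X_sequence T K th a b (xs l) (Ss l)"
    and \<D>: "\<forall>D\<in>\<D>. D \<subseteq> {..<n} \<times> K" "\<forall>D\<in>\<D>. \<forall>D'\<in>\<D>. D \<noteq> D' \<longrightarrow> D \<inter> D' = {}"
    and \<D>_fin: "\<forall>D\<in>\<D>. finite D \<and> D \<noteq> {}"
    and G: "\<forall>D\<in>\<D>. \<forall>d\<in>D. inj_on (G D d) (C D) \<and> G D d ` C D \<subseteq> Ss (fst d) (snd d)"
    and large: "\<forall>\<alpha>\<in>K. \<exists>D\<in>\<D>. |th \<alpha>| <o |C D|"
  shows "\<exists>z\<in>Sigma \<D> C. \<exists>z'\<in>Sigma \<D> C.
           capf a (amalgam xs G (fst z) (snd z)) \<inter> capf b (amalgam xs G (fst z') (snd z')) \<noteq> {}"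
proof -
  define y where "y z = amalgam xs G (fst z) (snd z)" for z
  have y: "\<forall>z\<in>Sigma \<D> C. finite (y z) \<and> y z \<noteq> {} \<and> y z \<subseteq> T"
  proof
    fix z assume "z \<in> Sigma \<D> C"
    then have z: "fst z \<in> \<D>" "snd z \<in> C (fst z)" by (cases z, simp)+
    show "finite (y z) \<and> y z \<noteq> {} \<and> y z \<subseteq> T"
      unfolding y_def
    proof (rule amalgam_finite_nonempty_subset[OF fam])
      show "finite (fst z)" "fst z \<noteq> {}" "fst z \<subseteq> {..<n} \<times> K"
        using z(1) \<D>(1) \<D>_fin by auto
      show "\<forall>d\<in>fst z. G (fst z) d (snd z) \<in> Ss (fst d) (snd d)" using G z by blast
    qed
  qed
  have xs: "\<forall>l<n. \<forall>i\<in>T. \<forall>j\<in>T. i \<noteq> j \<longrightarrow> xs l i \<inter> xs l j = {}"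
    using fam unfolding disj_fin_family_def by blast
  have Ss: "\<forall>l<n. \<forall>\<alpha>\<in>K. Ss l \<alpha> \<subseteq> T"
    "\<forall>l<n. \<forall>\<alpha>\<in>K. \<forall>\<beta>\<in>K. \<alpha> \<noteq> \<beta> \<longrightarrow> Ss l \<alpha> \<inter> Ss l \<beta> = {}"
    using fam unfolding X_sequence_def by blast+
  have "\<forall>\<xi>. finite {z\<in>Sigma \<D> C. \<xi> \<in> y z}"
    unfolding y_def by (rule allI, rule amalgam_point_finite[OF xs Ss \<D> G])
  from nice_point_finite_family[OF nice standing_infinite_T[OF st] y this
      standing_card_of_Sigma_ge[OF st large]]
  show ?thesis unfolding y_def .
qed

lemma nice_disjoint_family_not_separated:
  fixes T :: "'a set" and K :: "'k set" and th :: "'k \<Rightarrow> 'c set" and \<D> :: "(nat \<times> 'k) set set"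
    and xs :: "nat \<Rightarrow> 'a \<Rightarrow> 'a set" and Ss :: "nat \<Rightarrow> 'k \<Rightarrow> 'a set"
  assumes st: "standing T K th" and nice: "nice T a b"
    and fam: "\<forall>l<n. disj_fin_family T (xs l) \<and> X_sequence T K th a b (xs l) (Ss l)"
    and \<D>: "\<forall>D\<in>\<D>. D \<subseteq> {..<n} \<times> K" "\<forall>D\<in>\<D>. \<forall>D'\<in>\<D>. D \<noteq> D' \<longrightarrow> D \<inter> D' = {}"
    and \<D>_fin: "\<forall>D\<in>\<D>. finite D"
    and unbounded: "\<forall>\<alpha>\<in>K. \<exists>D\<in>\<D>. D \<noteq> {} \<and> snd ` D \<subseteq> aboveS |K| \<alpha>"
  shows "\<exists>D\<in>\<D>. \<exists>D'\<in>\<D>. D \<noteq> D' \<and> (\<forall>d\<in>D. \<forall>e\<in>D'. fst e = fst d \<longrightarrow>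
           \<not> separated a b (xs (fst d)) (Ss (fst d)) (snd d) (snd e))"
proof -
  define \<D>' where "\<D>' = {D\<in>\<D>. D \<noteq> {}}"
  have \<D>': "\<forall>D\<in>\<D>'. D \<subseteq> {..<n} \<times> K" "\<forall>D\<in>\<D>'. \<forall>D'\<in>\<D>'. D \<noteq> D' \<longrightarrow> D \<inter> D' = {}"
    "\<forall>D\<in>\<D>'. finite D \<and> D \<noteq> {}"
    using \<D> \<D>_fin unfolding \<D>'_def by blast+
  from ex_block_injections[of \<D>' "\<lambda>d. Ss (fst d) (snd d)"] \<D>'(3) obtain c G
    where cG: "\<forall>D\<in>\<D>'. c D \<in> D \<and> (\<forall>d\<in>D. inj_on (G D d) (Ss (fst (c D)) (snd (c D))) \<and>
                            G D d ` Ss (fst (c D)) (snd (c D)) \<subseteq> Ss (fst d) (snd d))"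
    by blast
  define C where "C D = Ss (fst (c D)) (snd (c D))" for D
  have G: "\<forall>D\<in>\<D>'. \<forall>d\<in>D. inj_on (G D d) (C D) \<and> G D d ` C D \<subseteq> Ss (fst d) (snd d)"
    using cG unfolding C_def by blast
  have d_K: "fst d < n" "snd d \<in> K" if "D \<in> \<D>'" "d \<in> D" for D d
    using \<D>'(1) that by (force simp: mem_Times_iff)+
  have "\<exists>D\<in>\<D>'. |th \<alpha>| <o |C D|" if \<alpha>: "\<alpha> \<in> K" for \<alpha>
  proof -
    obtain D where D: "D \<in> \<D>'" "snd ` D \<subseteq> aboveS |K| \<alpha>"
      using unbounded[rule_format, OF \<alpha>] unfolding \<D>'_def by auto
    have c: "c D \<in> D" using cG D(1) by blast
    then have "|th \<alpha>| <o |th (snd (c D))|"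
      using standing_th_increasing[OF st \<alpha> d_K(2)[OF D(1) c]] D(2) by blast
    moreover have "|th (snd (c D))| <o |C D|"
      using fam d_K[OF D(1) c] unfolding X_sequence_def C_def by blast
    ultimately show ?thesis using D(1) ordLess_transitive by metis
  qed
  then obtain z z' where z: "z \<in> Sigma \<D>' C" "z' \<in> Sigma \<D>' C"
    and meet: "capf a (amalgam xs G (fst z) (snd z)) \<inter> capf b (amalgam xs G (fst z') (snd z')) \<noteq> {}"
    using nice_amalgams_meet[OF st nice fam \<D>' G] by blast
  have zz: "fst z \<in> \<D>'" "snd z \<in> C (fst z)" "fst z' \<in> \<D>'" "snd z' \<in> C (fst z')"
    using z by (cases z, cases z', simp)+
  have not_sep: "\<not> separated a b (xs (fst d)) (Ss (fst d)) (snd d) (snd e)"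
    if "d \<in> fst z" "e \<in> fst z'" "fst e = fst d" for d e
  proof (rule amalgam_meets_not_separated[OF meet that(1) _ that(2) _ that(3)])
    show "G (fst z) d (snd z) \<in> Ss (fst d) (snd d)" using G zz(1,2) that(1) by blast
    have "G (fst z') e (snd z') \<in> Ss (fst e) (snd e)" using G zz(3,4) that(2) by blast
    then show "G (fst z') e (snd z') \<in> Ss (fst d) (snd e)" using that(3) by simp
  qed
  have "fst z \<noteq> fst z'"
  proof
    assume same: "fst z = fst z'"
    obtain d where d: "d \<in> fst z" using \<D>'(3) zz(1) by blast
    have "X_sequence T K th a b (xs (fst d)) (Ss (fst d))" using fam d_K(1)[OF zz(1) d] by blast
    from X_sequence_separated[OF this d_K(2)[OF zz(1) d]] show False
      using not_sep[OF d d[unfolded same]] by blast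
  qed
  moreover have "fst z \<in> \<D>" "fst z' \<in> \<D>" using zz(1,3) unfolding \<D>'_def by blast+
  ultimately show ?thesis using not_sep by blast
qed

lemma nice_prod_chain_condition:
  fixes T :: "'a set" and K :: "'k set" and th :: "'k \<Rightarrow> 'c set"
    and xs :: "nat \<Rightarrow> 'a \<Rightarrow> 'a set" and Ss :: "nat \<Rightarrow> 'k \<Rightarrow> 'a set"
  assumes st: "standing T K th" and nice: "nice T a b"
    and fam: "\<forall>l<n. disj_fin_family T (xs l) \<and> X_sequence T K th a b (xs l) (Ss l)"
  shows "chain_condition (prod_carrier n (\<lambda>l. Q_order K a b (xs l) (Ss l))) (prod_le n (\<lambda>l. (\<subseteq>))) K"
  unfolding chain_condition_def
proof (intro allI impI, rule ccontr)
  let ?P = "prod_carrier n (\<lambda>l. Q_order K a b (xs l) (Ss l))"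
  fix A assume anti: "antichain ?P (prod_le n (\<lambda>l. (\<subseteq>))) A" and "\<not> |A| <o |K|"
  then have large: "|K| \<le>o |A|" by simp
  have A: "A \<subseteq> ?P" using anti unfolding antichain_def by blast
  define E where "E p = Sigma {..<n} p" for p :: "nat \<Rightarrow> 'k set"
  have E_inj: "inj_on E A"
    using inj_on_subset[OF inj_on_Sigma_prod_carrier A] unfolding E_def .
  have E_sub: "E p \<subseteq> {..<n} \<times> K" "finite (E p)" if "p \<in> A" for p
    using A that unfolding E_def prod_carrier_def by (auto simp: mem_Q_order_iff)
  have "|A| \<le>o |E ` A|" by (rule card_of_ordLeq_inj[OF E_inj]) simp
  then have "|K| \<le>o |E ` A|" by (rule ordLeq_transitive[OF large])
  moreover have "\<forall>X\<in>E ` A. finite X" using E_sub by blast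
  ultimately obtain M R where M: "M \<subseteq> E ` A" "|K| \<le>o |M|" "delta_system M R"
    using delta_system_lemma[OF standing_cofinality[OF st] standing_uncountable_K[OF st]] by metis
  define \<D> where "\<D> = (\<lambda>X. X - R) ` M"
  have "|M| \<le>o |\<D>|" unfolding \<D>_def
    by (rule card_of_ordLeq_inj[OF delta_system_remainders_inj[OF M(3)]]) simp
  then have \<D>_large: "|K| \<le>o |\<D>|" by (rule ordLeq_transitive[OF M(2)])
  have \<D>_sub: "\<forall>D\<in>\<D>. D \<subseteq> {..<n} \<times> K" and \<D>_fin: "\<forall>D\<in>\<D>. finite D"
    using M(1) E_sub unfolding \<D>_def by blast+
  have \<D>_disj: "\<forall>D\<in>\<D>. \<forall>D'\<in>\<D>. D \<noteq> D' \<longrightarrow> D \<inter> D' = {}"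
    using delta_system_remainders_disjoint[OF M(3)] unfolding \<D>_def .
  have "\<forall>\<alpha>\<in>K. \<exists>D\<in>\<D>. D \<noteq> {} \<and> snd ` D \<subseteq> aboveS |K| \<alpha>"
    using disjoint_family_unbounded_member[OF standing_cofinality[OF st] standing_infinite_K[OF st]
        finite_lessThan \<D>_sub \<D>_disj \<D>_large] by blast
  from nice_disjoint_family_not_separated[OF st nice fam \<D>_sub \<D>_disj \<D>_fin this]
  obtain D D' where DD': "D \<in> \<D>" "D' \<in> \<D>" "D \<noteq> D'"
    and not_sep: "\<forall>d\<in>D. \<forall>e\<in>D'. fst e = fst d \<longrightarrow>
                    \<not> separated a b (xs (fst d)) (Ss (fst d)) (snd d) (snd e)"
    by blast
  obtain p q where pq: "p \<in> A" "q \<in> A" "E p \<in> M" "E q \<in> M" "D = E p - R" "D' = E q - R"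
    using DD'(1,2) M(1) unfolding \<D>_def by blast
  then have "p \<noteq> q" using DD'(3) by blast
  then have "\<not> compatible ?P (prod_le n (\<lambda>l. (\<subseteq>))) p q"
    using anti pq(1,2) unfolding antichain_def by blast
  then obtain l \<alpha> \<beta> where l: "l < n" "\<alpha> \<in> p l - q l" "\<beta> \<in> q l - p l"
    and sep: "separated a b (xs l) (Ss l) \<alpha> \<beta>"
    using prod_incompatible_separated A pq(1,2) by blast
  have "(l, \<alpha>) \<in> D" "(l, \<beta>) \<in> D'"
    using l M(3) pq unfolding E_def delta_system_def by auto
  then show False using not_sep sep by fastforce
qed

theorem mainTheorem3:
  fixes T :: "'a set" and K :: "'k set" and th :: "'k \<Rightarrow> 'c set"
    and a b :: "'a \<Rightarrow> nat set"
  assumes "standing T K th"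
    and "theta_pair T a b"
  shows "(nice T a b \<longleftrightarrow>
            (\<forall>x S. disj_fin_family T x \<and> X_sequence T K th a b x S \<longrightarrow>
               chain_condition (Q_order K a b x S) (\<subseteq>) K))
       \<and> (nice T a b \<longleftrightarrow>
            (\<forall>n (xs :: nat \<Rightarrow> 'a \<Rightarrow> 'a set) (Ss :: nat \<Rightarrow> 'k \<Rightarrow> 'a set).
               (\<forall>l<n. disj_fin_family T (xs l) \<and> X_sequence T K th a b (xs l) (Ss l)) \<longrightarrow>
               chain_condition
                 (prod_carrier n (\<lambda>l. Q_order K a b (xs l) (Ss l)))
                 (prod_le n (\<lambda>l. (\<subseteq>))) K))"
    (is "(?i \<longleftrightarrow> ?ii) \<and> (?i \<longleftrightarrow> ?iii)")
proof -
  have i_iii: "?i \<Longrightarrow> ?iii" using nice_prod_chain_condition[OF assms(1)] by blast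
  have iii_ii: "?iii \<Longrightarrow> ?ii"
  proof (intro allI impI)
    fix x S assume iii: "?iii" and xS: "disj_fin_family T x \<and> X_sequence T K th a b x S"
    have "chain_condition (prod_carrier 1 (\<lambda>_. Q_order K a b x S)) (prod_le 1 (\<lambda>_. (\<subseteq>))) K"
      using iii[rule_format, of 1 "\<lambda>_. x" "\<lambda>_. S"] xS by simp
    then show "chain_condition (Q_order K a b x S) (\<subseteq>) K"
      by (rule chain_condition_of_prod_carrier_1)
  qed
  have ii_i: "?ii \<Longrightarrow> ?i" using not_nice_not_chain_condition[OF assms(1)] by blast
  show ?thesis using i_iii iii_ii ii_i by blast
qed

end
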